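(* Let $A,B$ be wqos such that $A$ is self-residual, and let $k\in\mathbb{N}$. Then $\mathbf{w}(A\times (B\cdot k))\ge \mathbf{w}(A\times B)\cdot k$.
   Context: A wqo is a quasi-order with no infinite bad sequence. The width $\mathbf{w}(A)$ is the rank of the forest of nonempty finite sequences of pairwise incomparable elements of $A$ ordered by initial segment ($\mathbf{w}(A)=\sup_s(r(s)+1)$, $r(s)=\sup\{r(t)+1: t$ child of $s\}$). For $x\in A$, $A_{\not\le x}=\{y\in A: y\not\le x\}$ with the induced order. $A$ is self-residual if for every $x\in A$, $A_{\not\le x}$ contains a substructure (subset with induced order) isomorphic to $A$. $B\cdot k$ denotes the lexicographic sum of $k$ disjoint copies $B^{(0)},\dots,B^{(k-1)}$ of $B$: within a copy the order is that of $B$, and every element of $B^{(j)}$ is strictly below every element of $B^{(j')}$ whenever $j<j'$. $A\times C$ has the componentwise order; $\cdot$ on ordinals is ordinary multiplication. *)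

theory Defs
  imports Main
begin

definition qo_on :: "'a set \<Rightarrow> ('a \<Rightarrow> 'a \<Rightarrow> bool) \<Rightarrow> bool" where
  "qo_on A le \<longleftrightarrow> (\<forall>x\<in>A. le x x) \<and> (\<forall>x\<in>A. \<forall>y\<in>A. \<forall>z\<in>A. le x y \<longrightarrow> le y z \<longrightarrow> le x z)"

definition wqo_on :: "'a set \<Rightarrow> ('a \<Rightarrow> 'a \<Rightarrow> bool) \<Rightarrow> bool" where
  "wqo_on A le \<longleftrightarrow> qo_on A le \<and>
     (\<forall>f :: nat \<Rightarrow> 'a. (\<forall>n. f n \<in> A) \<longrightarrow> (\<exists>i j. i < j \<and> le (f i) (f j)))"

definition self_residual :: "'a set \<Rightarrow> ('a \<Rightarrow> 'a \<Rightarrow> bool) \<Rightarrow> bool" where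
  "self_residual A le \<longleftrightarrow> (\<forall>x\<in>A. \<exists>f. inj_on f A \<and> f ` A \<subseteq> {y\<in>A. \<not> le y x} \<and>
       (\<forall>a\<in>A. \<forall>b\<in>A. le a b \<longleftrightarrow> le (f a) (f b)))"

text \<open>Lexicographic sum B . k of k copies of B: carrier and order.\<close>
definition lexsum_carrier :: "'b set \<Rightarrow> nat \<Rightarrow> (nat \<times> 'b) set" where
  "lexsum_carrier B k = {(j, b). j < k \<and> b \<in> B}"

definition lexsum_le :: "('b \<Rightarrow> 'b \<Rightarrow> bool) \<Rightarrow> (nat \<times> 'b) \<Rightarrow> (nat \<times> 'b) \<Rightarrow> bool" where
  "lexsum_le le p q \<longleftrightarrow> fst p < fst q \<or> (fst p = fst q \<and> le (snd p) (snd q))"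

definition prod_le :: "('a \<Rightarrow> 'a \<Rightarrow> bool) \<Rightarrow> ('b \<Rightarrow> 'b \<Rightarrow> bool) \<Rightarrow> ('a \<times> 'b) \<Rightarrow> ('a \<times> 'b) \<Rightarrow> bool" where
  "prod_le leA leB p q \<longleftrightarrow> leA (fst p) (fst q) \<and> leB (snd p) (snd q)"

text \<open>Nodes of the forest: nonempty finite sequences of pairwise incomparable elements.
  The children of a node s are the one-element extensions s @ [x].\<close>
definition antichain_seq :: "'a set \<Rightarrow> ('a \<Rightarrow> 'a \<Rightarrow> bool) \<Rightarrow> 'a list \<Rightarrow> bool" where
  "antichain_seq A le s \<longleftrightarrow> s \<noteq> [] \<and> set s \<subseteq> A \<and>
     (\<forall>i<length s. \<forall>j<length s. i \<noteq> j \<longrightarrow> \<not> le (s ! i) (s ! j))"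

text \<open>Ordinals are represented by well-order relations (as in Main's BNF library, compared
  with ordLeq).  rank_ge A le W s d means: r(s) >= order type of the strict initial segment
  of W below d.\<close>
inductive rank_ge :: "'a set \<Rightarrow> ('a \<Rightarrow> 'a \<Rightarrow> bool) \<Rightarrow> 'c rel \<Rightarrow> 'a list \<Rightarrow> 'c \<Rightarrow> bool"
  for A le W where
  "(\<And>d'. (d', d) \<in> W \<Longrightarrow> d' \<noteq> d \<Longrightarrow>
      \<exists>x. antichain_seq A le (s @ [x]) \<and> rank_ge A le W (s @ [x]) d')
   \<Longrightarrow> rank_ge A le W s d"

text \<open>width_ge A le W means: w(A) >= order type of W, where w(A) = sup_s (r(s)+1).
  (w(A) > beta iff some node s has r(s) >= beta.)\<close>
definition width_ge :: "'a set \<Rightarrow> ('a \<Rightarrow> 'a \<Rightarrow> bool) \<Rightarrow> 'c rel \<Rightarrow> bool" where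
  "width_ge A le W \<longleftrightarrow> (\<forall>d\<in>Field W. \<exists>s. antichain_seq A le s \<and> rank_ge A le W s d)"

text \<open>Ordinal multiplication by a natural number: the order type of W times k is the
  lexicographic product of {0..<k} (most significant) with W.\<close>
definition ord_mult_nat :: "'c rel \<Rightarrow> nat \<Rightarrow> (nat \<times> 'c) rel" where
  "ord_mult_nat W k = {((i, a), (j, b)). i < k \<and> j < k \<and> a \<in> Field W \<and> b \<in> Field W \<and>
       (i < j \<or> (i = j \<and> (a, b) \<in> W))}"

end

theory Submission
  imports Defs
begin

text \<open>A node s of the forest of A \<times> (B \<cdot> k) is extended by antichains t of A \<times> B transported
  into copy i as (x, b) \<mapsto> (h x, i, b), where h is an order embedding of A whose image lies
  nowhere below the A-components of s; such an h exists for any finite set of A-components because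
  A is self-residual and wqo. Transported elements are then incomparable with the elements of s
  lying in higher copies. By induction on i and on the rank of t, the node s @ h_i(t) has rank at
  least W \<cdot> i + rank t: moving down within copy i follows the children of t, while dropping to a
  lower copy j starts a fresh antichain of the required rank in copy j, transported by a new
  embedding that avoids the whole sequence built so far.\<close>

definition order_embedding :: "'a set \<Rightarrow> ('a \<Rightarrow> 'a \<Rightarrow> bool) \<Rightarrow> ('a \<Rightarrow> 'a) \<Rightarrow> bool" where
  "order_embedding A le f \<longleftrightarrow> (\<forall>x\<in>A. f x \<in> A) \<and> (\<forall>x\<in>A. \<forall>y\<in>A. le (f x) (f y) \<longleftrightarrow> le x y)"

lemma order_embedding_id: "order_embedding A le id"
  by (simp add: order_embedding_def)

lemma order_embedding_comp:
  "order_embedding A le f \<Longrightarrow> order_embedding A le g \<Longrightarrow> order_embedding A le (f \<circ> g)"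
  by (auto simp: order_embedding_def)

lemma order_embedding_funpow: "order_embedding A le f \<Longrightarrow> order_embedding A le (f ^^ n)"
  by (induction n) (auto simp: order_embedding_def)

lemma order_embedding_funpow_above:
  assumes "wqo_on A le" and f: "order_embedding A le f" and "x \<in> A"
  shows "\<exists>n>0. le x ((f ^^ n) x)"
proof -
  have orbit: "(f ^^ n) x \<in> A" for n
    using order_embedding_funpow[OF f, of n] \<open>x \<in> A\<close> by (auto simp: order_embedding_def)
  obtain i j where "i < j" and "le ((f ^^ i) x) ((f ^^ j) x)"
    using assms(1) orbit unfolding wqo_on_def by (meson conjunct2 spec[of _ "\<lambda>n. (f ^^ n) x"])
  moreover have "(f ^^ j) x = (f ^^ i) ((f ^^ (j - i)) x)"
    using \<open>i < j\<close> by (metis funpow_add le_add_diff_inverse less_imp_le o_apply)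
  ultimately have "le ((f ^^ i) x) ((f ^^ i) ((f ^^ (j - i)) x))" by simp
  then have "le x ((f ^^ (j - i)) x)"
    using order_embedding_funpow[OF f, of i] orbit \<open>x \<in> A\<close> by (simp add: order_embedding_def)
  with \<open>i < j\<close> show ?thesis by (intro exI[of _ "j - i"]) simp
qed

text \<open>Given f avoiding F and g avoiding b, some power f^n satisfies b \<le> f^n b by the wqo property,
  so f^n \<circ> g avoids b as well as F.\<close>
lemma self_residual_avoiding_embedding:
  assumes wqo: "wqo_on A le" and "self_residual A le" and "finite F" and "F \<subseteq> A"
  shows "\<exists>f. order_embedding A le f \<and> (\<forall>x\<in>A. \<forall>y\<in>F. \<not> le (f x) y)"
  using \<open>finite F\<close> \<open>F \<subseteq> A\<close>
proof (induction F rule: finite_induct)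
  case empty
  show ?case using order_embedding_id by blast
next
  case (insert b F)
  then obtain f where f: "order_embedding A le f" and f_avoids: "\<forall>x\<in>A. \<forall>y\<in>F. \<not> le (f x) y"
    by auto
  have "b \<in> A" using insert.prems by simp
  then obtain g where g_into: "g ` A \<subseteq> {y\<in>A. \<not> le y b}"
    and g_le: "\<forall>x\<in>A. \<forall>y\<in>A. le x y \<longleftrightarrow> le (g x) (g y)"
    using \<open>self_residual A le\<close> unfolding self_residual_def by blast
  have g: "order_embedding A le g" using g_into g_le by (auto simp: order_embedding_def)
  obtain n where "n > 0" and b_below: "le b ((f ^^ n) b)"
    using order_embedding_funpow_above[OF wqo f \<open>b \<in> A\<close>] by blast
  then obtain m where n: "n = Suc m" using gr0_conv_Suc by blast
  have fn: "order_embedding A le (f ^^ n)" and fm: "order_embedding A le (f ^^ m)"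
    using order_embedding_funpow[OF f] by blast+
  have "\<not> le ((f ^^ n \<circ> g) x) y" if "x \<in> A" and "y \<in> insert b F" for x y
  proof
    assume le: "le ((f ^^ n \<circ> g) x) y"
    have gx: "g x \<in> A" "\<not> le (g x) b" using g_into \<open>x \<in> A\<close> by auto
    show False
    proof (cases "y = b")
      case True
      have "(f ^^ n) (g x) \<in> A" "(f ^^ n) b \<in> A" using fn gx \<open>b \<in> A\<close> by (auto simp: order_embedding_def)
      moreover have "qo_on A le" using wqo by (simp add: wqo_on_def)
      ultimately have "le ((f ^^ n) (g x)) ((f ^^ n) b)"
        using le True b_below \<open>b \<in> A\<close> unfolding qo_on_def comp_apply by blast
      with fn gx \<open>b \<in> A\<close> have "le (g x) b" by (simp add: order_embedding_def)
      with gx show False by simp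
    next
      case False
      have "(f ^^ m) (g x) \<in> A" using fm gx by (auto simp: order_embedding_def)
      moreover have "(f ^^ n \<circ> g) x = f ((f ^^ m) (g x))" by (simp add: n)
      ultimately show False using False le that f_avoids by auto
    qed
  qed
  then show ?case using order_embedding_comp[OF fn g] by blast
qed

definition incomparable_seq :: "'a set \<Rightarrow> ('a \<Rightarrow> 'a \<Rightarrow> bool) \<Rightarrow> 'a list \<Rightarrow> bool" where
  "incomparable_seq X le s \<longleftrightarrow> set s \<subseteq> X \<and>
     (\<forall>i<length s. \<forall>j<length s. i \<noteq> j \<longrightarrow> \<not> le (s ! i) (s ! j))"

lemma antichain_seq_iff: "antichain_seq X le s \<longleftrightarrow> s \<noteq> [] \<and> incomparable_seq X le s"
  by (auto simp: antichain_seq_def incomparable_seq_def)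

lemma incomparable_seq_Nil [simp]: "incomparable_seq X le []"
  by (simp add: incomparable_seq_def)

lemma incomparable_seq_append:
  "incomparable_seq X le (p @ q) \<longleftrightarrow> incomparable_seq X le p \<and> incomparable_seq X le q \<and>
     (\<forall>x\<in>set p. \<forall>y\<in>set q. \<not> le x y \<and> \<not> le y x)"
  (is "?lhs \<longleftrightarrow> ?rhs")
proof
  assume ?lhs
  then have set: "set p \<subseteq> X" "set q \<subseteq> X"
    and incomp: "\<And>i j. i < length (p @ q) \<Longrightarrow> j < length (p @ q) \<Longrightarrow> i \<noteq> j \<Longrightarrow>
                   \<not> le ((p @ q) ! i) ((p @ q) ! j)"
    by (auto simp: incomparable_seq_def)
  have "incomparable_seq X le p"
    unfolding incomparable_seq_def
  proof (intro conjI allI impI)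
    fix i j assume "i < length p" "j < length p" "i \<noteq> j"
    then show "\<not> le (p ! i) (p ! j)" using incomp[of i j] by (simp add: nth_append)
  qed (use set in simp)
  moreover have "incomparable_seq X le q"
    unfolding incomparable_seq_def
  proof (intro conjI allI impI)
    fix i j assume "i < length q" "j < length q" "i \<noteq> j"
    then show "\<not> le (q ! i) (q ! j)"
      using incomp[of "length p + i" "length p + j"] by (simp add: nth_append)
  qed (use set in simp)
  moreover have "\<not> le x y \<and> \<not> le y x" if "x \<in> set p" "y \<in> set q" for x y
  proof -
    obtain i where "i < length p" "x = p ! i" using \<open>x \<in> set p\<close> by (auto simp: in_set_conv_nth)
    moreover obtain j where "j < length q" "y = q ! j" using \<open>y \<in> set q\<close> by (auto simp: in_set_conv_nth)
    ultimately show ?thesis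
      using incomp[of i "length p + j"] incomp[of "length p + j" i] by (simp add: nth_append)
  qed
  ultimately show ?rhs by blast
next
  assume ?rhs
  then have p: "incomparable_seq X le p" and q: "incomparable_seq X le q"
    and cross: "\<And>x y. x \<in> set p \<Longrightarrow> y \<in> set q \<Longrightarrow> \<not> le x y \<and> \<not> le y x"
    by auto
  show ?lhs
    unfolding incomparable_seq_def
  proof (intro conjI allI impI)
    show "set (p @ q) \<subseteq> X" using p q by (simp add: incomparable_seq_def)
    fix i j assume "i < length (p @ q)" "j < length (p @ q)" "i \<noteq> j"
    then show "\<not> le ((p @ q) ! i) ((p @ q) ! j)"
      using p q cross[OF nth_mem nth_mem, of i j] cross[OF nth_mem nth_mem, of j "i - length p"]
        cross[OF nth_mem nth_mem, of i "j - length p"]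
      by (cases "i < length p"; cases "j < length p") (auto simp: nth_append incomparable_seq_def)
  qed
qed

lemma incomparable_seq_prefix: "incomparable_seq X le (p @ q) \<Longrightarrow> incomparable_seq X le p"
  by (simp add: incomparable_seq_append)

lemma incomparable_seq_map:
  assumes "incomparable_seq X le t" and "g ` set t \<subseteq> Y"
    and "\<And>x y. x \<in> set t \<Longrightarrow> y \<in> set t \<Longrightarrow> le' (g x) (g y) \<Longrightarrow> le x y"
  shows "incomparable_seq Y le' (map g t)"
  unfolding incomparable_seq_def
proof (intro conjI allI impI)
  show "set (map g t) \<subseteq> Y" using assms(2) by simp
  fix i j assume "i < length (map g t)" "j < length (map g t)" "i \<noteq> j"
  then show "\<not> le' (map g t ! i) (map g t ! j)"
    using assms(1) assms(3)[OF nth_mem nth_mem, of i j] unfolding incomparable_seq_def by auto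
qed

lemma rank_geD:
  assumes "rank_ge X le R s d" and "(d', d) \<in> R" and "d' \<noteq> d"
  shows "\<exists>x. antichain_seq X le (s @ [x]) \<and> rank_ge X le R (s @ [x]) d'"
  using assms(1) by (cases rule: rank_ge.cases) (use assms(2,3) in blast)

lemma rank_ge_downward:
  assumes "rank_ge X le R s d" and "(d', d) \<in> R" and "trans R" and "antisym R"
  shows "rank_ge X le R s d'"
proof (rule rank_ge.intros)
  fix d'' assume "(d'', d') \<in> R" and "d'' \<noteq> d'"
  with assms(2-4) have "(d'', d) \<in> R" and "d'' \<noteq> d"
    by (metis transD, metis antisymD)
  with assms(1) show "\<exists>x. antichain_seq X le (s @ [x]) \<and> rank_ge X le R (s @ [x]) d''"
    by (rule rank_geD)
qed

lemma rank_ge_butlast: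
  assumes "rank_ge X le R (s @ [x]) d" and "antichain_seq X le (s @ [x])"
    and "trans R" and "antisym R"
  shows "rank_ge X le R s d"
proof (rule rank_ge.intros)
  fix d' assume "(d', d) \<in> R" "d' \<noteq> d"
  then have "rank_ge X le R (s @ [x]) d'" using rank_ge_downward[OF assms(1) _ assms(3,4)] by simp
  with assms(2) show "\<exists>y. antichain_seq X le (s @ [y]) \<and> rank_ge X le R (s @ [y]) d'" by blast
qed

lemma rank_ge_prefix:
  assumes "rank_ge X le R (p @ q) d" and "incomparable_seq X le (p @ q)"
    and "trans R" and "antisym R"
  shows "rank_ge X le R p d"
  using assms(1,2)
proof (induction q rule: rev_induct)
  case (snoc y q)
  then have "rank_ge X le R (p @ q) d"
    using rank_ge_butlast[of X le R "p @ q" y d] assms(3,4) by (simp add: antichain_seq_iff)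
  with snoc show ?case by (simp add: incomparable_seq_append)
qed simp

definition into_copy :: "('a \<Rightarrow> 'a) \<Rightarrow> nat \<Rightarrow> 'a \<times> 'b \<Rightarrow> 'a \<times> nat \<times> 'b" where
  "into_copy h i p = (h (fst p), i, snd p)"

lemma trans_ord_mult_nat: "trans W \<Longrightarrow> trans (ord_mult_nat W k)"
  unfolding ord_mult_nat_def trans_def by auto

lemma antisym_ord_mult_nat: "antisym W \<Longrightarrow> antisym (ord_mult_nat W k)"
  unfolding ord_mult_nat_def antisym_def by auto

lemma Field_ord_mult_nat: "(i, a) \<in> Field (ord_mult_nat W k) \<Longrightarrow> i < k \<and> a \<in> Field W"
  unfolding Field_def ord_mult_nat_def by auto

locale lexsum_width =
  fixes A :: "'a set" and leA :: "'a \<Rightarrow> 'a \<Rightarrow> bool"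
    and B :: "'b set" and leB :: "'b \<Rightarrow> 'b \<Rightarrow> bool"
    and k :: nat and W :: "'c rel"
  assumes wqo_A: "wqo_on A leA" and self_residual_A: "self_residual A leA"
    and well_order_W: "Well_order W"
    and width_AB: "width_ge (A \<times> B) (prod_le leA leB) W"
begin

abbreviation "AB \<equiv> A \<times> B"
abbreviation "leAB \<equiv> prod_le leA leB"
abbreviation "ABk \<equiv> A \<times> lexsum_carrier B k"
abbreviation "leABk \<equiv> prod_le leA (lexsum_le leB)"
abbreviation "Wk \<equiv> ord_mult_nat W k"

lemma trans_Wk: "trans Wk" and antisym_Wk: "antisym Wk"
  using well_order_W trans_ord_mult_nat antisym_ord_mult_nat
  by (auto simp: well_order_on_def linear_order_on_def partial_order_on_def preorder_on_def)

text \<open>Every element of copy i whose A-component lies in h ` A is incomparable with all elements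
  of an admissible prefix (see incomparable_seq_append_copy).\<close>
definition admissible_prefix :: "nat \<Rightarrow> ('a \<Rightarrow> 'a) \<Rightarrow> ('a \<times> nat \<times> 'b) list \<Rightarrow> bool" where
  "admissible_prefix i h s \<longleftrightarrow> incomparable_seq ABk leABk s \<and>
     (\<forall>e\<in>set s. i < fst (snd e) \<and> (\<forall>x\<in>A. \<not> leA (h x) (fst e)))"

lemma incomparable_seq_append_copy:
  assumes s: "admissible_prefix i h s" and h: "order_embedding A leA h" and "i < k"
    and t: "incomparable_seq AB leAB t"
  shows "incomparable_seq ABk leABk (s @ map (into_copy h i) t)"
proof -
  have t_in: "set t \<subseteq> AB" using t by (simp add: incomparable_seq_def)
  have "incomparable_seq ABk leABk (map (into_copy h i) t)"
  proof (rule incomparable_seq_map[OF t])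
    show "into_copy h i ` set t \<subseteq> ABk"
      using t_in h \<open>i < k\<close> by (auto simp: into_copy_def order_embedding_def lexsum_carrier_def)
    show "leAB x y" if "x \<in> set t" "y \<in> set t" "leABk (into_copy h i x) (into_copy h i y)" for x y
    proof -
      have "fst x \<in> A" "fst y \<in> A" using that(1,2) t_in by auto
      with that(3) h show ?thesis
        by (simp add: into_copy_def prod_le_def lexsum_le_def order_embedding_def)
    qed
  qed
  moreover have "\<not> leABk e y \<and> \<not> leABk y e"
    if e: "e \<in> set s" and "y \<in> set (map (into_copy h i) t)" for e y
  proof -
    obtain p where "p \<in> set t" and y: "y = into_copy h i p"
      using \<open>y \<in> set (map (into_copy h i) t)\<close> by auto
    then have "fst p \<in> A" using t_in by auto
    then have "\<not> leA (h (fst p)) (fst e)" and "i < fst (snd e)"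
      using s e by (simp_all add: admissible_prefix_def)
    then show ?thesis by (auto simp: y into_copy_def prod_le_def lexsum_le_def)
  qed
  ultimately show ?thesis
    using s by (simp add: incomparable_seq_append admissible_prefix_def)
qed

lemma admissible_prefix_append_copy:
  assumes "j < i" and s: "admissible_prefix i h s" and "order_embedding A leA h" and "i < k"
    and t: "incomparable_seq AB leAB t"
  shows "\<exists>h'. order_embedding A leA h' \<and> admissible_prefix j h' (s @ map (into_copy h i) t)"
proof -
  let ?s = "s @ map (into_copy h i) t"
  have s_incomp: "incomparable_seq ABk leABk ?s"
    using incomparable_seq_append_copy[OF s assms(3,4) t] .
  then have "fst ` set ?s \<subseteq> A" by (auto simp: incomparable_seq_def)
  then obtain h' where h': "order_embedding A leA h'"
    and avoids: "\<forall>x\<in>A. \<forall>y\<in>fst ` set ?s. \<not> leA (h' x) y"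
    using self_residual_avoiding_embedding[OF wqo_A self_residual_A, of "fst ` set ?s"] by auto
  have "j < fst (snd e)" if "e \<in> set ?s" for e
    using that \<open>j < i\<close> s by (auto simp: admissible_prefix_def into_copy_def)
  with avoids s_incomp have "admissible_prefix j h' ?s"
    unfolding admissible_prefix_def by blast
  with h' show ?thesis by blast
qed

lemma rank_ge_append_lower_copy:
  assumes "j < i" and "j < k" and "b \<in> Field W" and "i < k"
    and s: "admissible_prefix i h s" and h: "order_embedding A leA h"
    and t: "incomparable_seq AB leAB t"
    and lower: "\<And>t' h' s'. rank_ge AB leAB W t' b \<Longrightarrow> incomparable_seq AB leAB t' \<Longrightarrow>
      order_embedding A leA h' \<Longrightarrow> admissible_prefix j h' s' \<Longrightarrow>
      rank_ge ABk leABk Wk (s' @ map (into_copy h' j) t') (j, b)"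
  shows "\<exists>y. antichain_seq ABk leABk ((s @ map (into_copy h i) t) @ [y]) \<and>
    rank_ge ABk leABk Wk ((s @ map (into_copy h i) t) @ [y]) (j, b)"
proof -
  let ?s = "s @ map (into_copy h i) t"
  obtain t' where t': "antichain_seq AB leAB t'" "rank_ge AB leAB W t' b"
    using bspec[OF width_AB[unfolded width_ge_def] \<open>b \<in> Field W\<close>] by blast
  obtain y t'' where t'_eq: "t' = y # t''"
    using t' by (cases t') (auto simp: antichain_seq_iff)
  obtain h' where h': "order_embedding A leA h'" "admissible_prefix j h' ?s"
    using admissible_prefix_append_copy[OF \<open>j < i\<close> s h \<open>i < k\<close> t] by blast
  have "rank_ge ABk leABk Wk (?s @ map (into_copy h' j) t') (j, b)"
    using lower[OF t'(2) _ h'] t' by (simp add: antichain_seq_iff)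
  moreover have "incomparable_seq ABk leABk (?s @ map (into_copy h' j) t')"
    using incomparable_seq_append_copy[OF h'(2,1) \<open>j < k\<close>] t' by (simp add: antichain_seq_iff)
  moreover have "?s @ map (into_copy h' j) t' = (?s @ [into_copy h' j y]) @ map (into_copy h' j) t''"
    using t'_eq by simp
  ultimately have "rank_ge ABk leABk Wk (?s @ [into_copy h' j y]) (j, b)"
    and "incomparable_seq ABk leABk (?s @ [into_copy h' j y])"
    using rank_ge_prefix[OF _ _ trans_Wk antisym_Wk] incomparable_seq_prefix by metis+
  then show ?thesis
    by (intro exI[of _ "into_copy h' j y"]) (simp add: antichain_seq_iff)
qed

lemma rank_ge_append_copy:
  assumes "i < k" and "rank_ge AB leAB W t a" and "incomparable_seq AB leAB t"
    and "order_embedding A leA h" and "admissible_prefix i h s"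
  shows "rank_ge ABk leABk Wk (s @ map (into_copy h i) t) (i, a)"
  using assms
proof (induction i arbitrary: a t s h rule: less_induct)
  case (less i)
  from less.prems(2,1,3-5) show ?case
  proof (induction t a rule: rank_ge.induct)
    case (1 a t)
    let ?s = "s @ map (into_copy h i) t"
    show ?case
    proof (rule rank_ge.intros)
      fix d' assume "(d', (i, a)) \<in> Wk" and "d' \<noteq> (i, a)"
      then obtain j b where d': "d' = (j, b)" and "j < k" and "b \<in> Field W"
        and ji: "j < i \<or> j = i \<and> (b, a) \<in> W \<and> b \<noteq> a"
        by (auto simp: ord_mult_nat_def Field_def)
      show "\<exists>y. antichain_seq ABk leABk (?s @ [y]) \<and> rank_ge ABk leABk Wk (?s @ [y]) d'"
      proof (cases "j < i")
        case False
        with ji have "j = i" "(b, a) \<in> W" "b \<noteq> a" by auto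
        then obtain x where tx: "antichain_seq AB leAB (t @ [x])"
          and "i < k \<longrightarrow> incomparable_seq AB leAB (t @ [x]) \<longrightarrow> order_embedding A leA h \<longrightarrow>
            admissible_prefix i h s \<longrightarrow>
            rank_ge ABk leABk Wk (s @ map (into_copy h i) (t @ [x])) (i, b)"
          using "1.IH" by blast
        then have "rank_ge ABk leABk Wk (s @ map (into_copy h i) (t @ [x])) (i, b)"
          using "1.prems" by (simp add: antichain_seq_iff)
        moreover have "antichain_seq ABk leABk (s @ map (into_copy h i) (t @ [x]))"
          using incomparable_seq_append_copy[OF "1.prems"(4,3,1), of "t @ [x]"] tx
          by (simp add: antichain_seq_iff)
        ultimately show ?thesis
          using d' \<open>j = i\<close> by (intro exI[of _ "into_copy h i x"]) simp
      next
        case True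
        have "\<exists>y. antichain_seq ABk leABk (?s @ [y]) \<and> rank_ge ABk leABk Wk (?s @ [y]) (j, b)"
          by (rule rank_ge_append_lower_copy[OF True \<open>j < k\<close> \<open>b \<in> Field W\<close> "1.prems"(1,4,3,2)])
            (rule less.IH[OF True \<open>j < k\<close>]; assumption)
        with d' show ?thesis by simp
      qed
    qed
  qed
qed

lemma width_ge_lexsum: "width_ge ABk leABk Wk"
  unfolding width_ge_def
proof
  fix d assume "d \<in> Field Wk"
  obtain i a where d: "d = (i, a)" by (cases d)
  with \<open>d \<in> Field Wk\<close> have "i < k" and "a \<in> Field W"
    using Field_ord_mult_nat[of i a W k] by simp_all
  then obtain t where t: "antichain_seq AB leAB t" "rank_ge AB leAB W t a"
    using bspec[OF width_AB[unfolded width_ge_def] \<open>a \<in> Field W\<close>] by blast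
  have adm: "admissible_prefix i id []" by (simp add: admissible_prefix_def)
  have "rank_ge ABk leABk Wk (map (into_copy id i) t) (i, a)"
    using rank_ge_append_copy[OF \<open>i < k\<close> t(2) _ order_embedding_id adm] t(1)
    by (simp add: antichain_seq_iff)
  moreover have "antichain_seq ABk leABk (map (into_copy id i) t)"
    using incomparable_seq_append_copy[OF adm order_embedding_id \<open>i < k\<close>, of t] t(1)
    by (simp add: antichain_seq_iff)
  ultimately show "\<exists>s. antichain_seq ABk leABk s \<and> rank_ge ABk leABk Wk s d"
    unfolding d by blast
qed

end

theorem mainTheorem3:
  fixes A :: "'a set" and leA :: "'a \<Rightarrow> 'a \<Rightarrow> bool"
    and B :: "'b set" and leB :: "'b \<Rightarrow> 'b \<Rightarrow> bool"
    and k :: nat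
  assumes "wqo_on A leA" and "wqo_on B leB" and "self_residual A leA"
  shows "\<forall>W :: 'c rel. Well_order W \<and> width_ge (A \<times> B) (prod_le leA leB) W \<longrightarrow>
           width_ge (A \<times> lexsum_carrier B k) (prod_le leA (lexsum_le leB)) (ord_mult_nat W k)"
proof (intro allI impI)
  fix W :: "'c rel"
  assume "Well_order W \<and> width_ge (A \<times> B) (prod_le leA leB) W"
  then interpret lexsum_width A leA B leB k W
    using assms(1,3) by unfold_locales auto
  show "width_ge (A \<times> lexsum_carrier B k) (prod_le leA (lexsum_le leB)) (ord_mult_nat W k)"
    by (rule width_ge_lexsum)
qed

end
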